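(* Let $n\ge 1$. (1) If the additive group $\mathbb{R}^n$ has a subgroup $G$ with $G\in\mathcal{N}\setminus\mathcal{M}$, then there is no translation invariant Borel hull operation on $\mathcal{N}$ with respect to $\mathcal{N}$. (2) If $\mathbb{R}^n$ has a subgroup $H$ with $H\in\mathcal{M}\setminus\mathcal{N}$, then there is no translation invariant Borel hull operation on $\mathcal{M}$ with respect to $\mathcal{M}$.
   Context: $\mathcal{N}$ is the $\sigma$-ideal of Lebesgue null subsets of $\mathbb{R}^n$, and $\mathcal{M}$ is the $\sigma$-ideal of meager subsets of $\mathbb{R}^n$. For $A\subseteq\mathbb{R}^n$ and $x\in\mathbb{R}^n$ put $A+x=\{a+x:a\in A\}$. For a $\sigma$-ideal $\mathcal{I}$ with a Borel base, i.e. every set in $\mathcal{I}$ is contained in a Borel set in $\mathcal{I}$, and a family $\mathcal{F}$ of sets, a Borel hull operation on $\mathcal{F}$ with respect to $\mathcal{I}$ is a map $\psi$ from $\mathcal{F}$ to the Borel sets such that $A\subseteq\psi(A)$ and $\psi(A)\setminus A\in\mathcal{I}$ for all $A\in\mathcal{F}$. When $\mathcal{I}$ and $\mathcal{F}$ are translation invariant families of subsets of $\mathbb{R}^n$, such a $\psi$ is translation invariant if $\psi(A+x)=\psi(A)+x$ for all $A\in\mathcal{F}$ and $x\in\mathbb{R}^n$. *)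

theory Defs
  imports "HOL-Analysis.Analysis"
begin

definition nowhere_dense :: "'a::topological_space set \<Rightarrow> bool" where
  "nowhere_dense A \<longleftrightarrow> interior (closure A) = {}"

definition meager :: "'a::topological_space set \<Rightarrow> bool" where
  "meager A \<longleftrightarrow> (\<exists>F :: nat \<Rightarrow> 'a set. (\<forall>k. nowhere_dense (F k)) \<and> A \<subseteq> (\<Union>k. F k))"

definition additive_subgroup :: "'a::ab_group_add set \<Rightarrow> bool" where
  "additive_subgroup G \<longleftrightarrow> 0 \<in> G \<and> (\<forall>x\<in>G. \<forall>y\<in>G. x - y \<in> G)"

definition borel_hull_op ::
  "'a::topological_space set set \<Rightarrow> 'a set set \<Rightarrow> ('a set \<Rightarrow> 'a set) \<Rightarrow> bool" where
  "borel_hull_op I F psi \<longleftrightarrow>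
     (\<forall>A\<in>F. psi A \<in> sets borel \<and> A \<subseteq> psi A \<and> psi A - A \<in> I)"

definition translation_invariant_op ::
  "'a::ab_group_add set set \<Rightarrow> ('a set \<Rightarrow> 'a set) \<Rightarrow> bool" where
  "translation_invariant_op F psi \<longleftrightarrow>
     (\<forall>A\<in>F. \<forall>x. psi ((\<lambda>a. a + x) ` A) = (\<lambda>a. a + x) ` psi A)"

end

theory Submission
  imports Defs
begin

text \<open>
  Let \<open>\<psi>\<close> be a translation invariant Borel hull operation for an ideal \<open>I\<close> (null or meager sets)
  and let \<open>G \<in> I\<close> be a subgroup not in the other ideal \<open>J\<close>. Then \<open>B = \<psi> G\<close> is a Borel set in \<open>I\<close>
  with \<open>B + g = B\<close> for \<open>g \<in> G\<close>. A subgroup outside \<open>J\<close> is dense, since its closure is a subgroup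
  with nonempty interior (for measure by Steinhaus' theorem). Borel sets invariant under a dense set of
  translations satisfy a zero-one law for \<open>J\<close>: \<open>B\<close> or its complement lies in \<open>J\<close>. But \<open>B\<close> contains
  \<open>G \<notin> J\<close>, and since \<open>B \<in> I\<close> is not everything, the complement of \<open>B\<close> contains a translate
  \<open>G + x\<close>, which is not in \<open>J\<close> either.

  For category, the zero-one law holds because a Borel set is comeager in some nonempty open set
  unless it is meager; an element of \<open>G\<close> moves such a set for \<open>B\<close> onto one meeting such a set for
  the complement, and their intersection is a nonempty open meager set. For measure, Fubini's
  theorem yields \<open>t\<close> such that \<open>D = {y \<in> B. y + t \<notin> B}\<close> is not null; by Steinhaus \<open>D - D\<close>
  contains a ball around \<open>0\<close>, and \<open>h \<in> G\<close> close to \<open>-t\<close> gives \<open>a, b \<in> D\<close> with \<open>(b + t) + h = a\<close>,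
  contradicting invariance.
\<close>

section \<open>Additive subgroups\<close>

lemma additive_subgroup_diff:
  "additive_subgroup G \<Longrightarrow> x \<in> G \<Longrightarrow> y \<in> G \<Longrightarrow> x - y \<in> G"
  unfolding additive_subgroup_def by blast

lemma additive_subgroup_add:
  assumes "additive_subgroup G" "x \<in> G" "y \<in> G"
  shows "x + y \<in> G"
proof -
  have "0 - y \<in> G"
    using assms additive_subgroup_diff unfolding additive_subgroup_def by blast
  then show ?thesis
    using additive_subgroup_diff[OF assms(1,2), of "0 - y"] by simp
qed

lemma additive_subgroup_translation_eq:
  assumes "additive_subgroup G" "g \<in> G"
  shows "(\<lambda>a. a + g) ` G = G"
proof
  show "(\<lambda>a. a + g) ` G \<subseteq> G"
    using additive_subgroup_add[OF assms(1) _ assms(2)] by blast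
  show "G \<subseteq> (\<lambda>a. a + g) ` G"
  proof
    fix x assume "x \<in> G"
    then have "x - g \<in> G" using additive_subgroup_diff assms by blast
    then show "x \<in> (\<lambda>a. a + g) ` G" by (rule rev_image_eqI) simp
  qed
qed

lemma additive_subgroup_closure:
  fixes G :: "'a::real_normed_vector set"
  assumes "additive_subgroup G"
  shows "additive_subgroup (closure G)"
proof -
  have "(\<lambda>p. fst p - snd p) ` closure (G \<times> G) \<subseteq> closure G"
  proof (rule image_closure_subset)
    show "continuous_on (closure (G \<times> G)) (\<lambda>p. fst p - snd p)"
      by (intro continuous_on_diff continuous_on_fst continuous_on_snd continuous_on_id)
    show "(\<lambda>p. fst p - snd p) ` (G \<times> G) \<subseteq> closure G"
      using additive_subgroup_diff[OF assms] closure_subset by fastforce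
  qed simp
  then have "x - y \<in> closure G" if "x \<in> closure G" "y \<in> closure G" for x y
    using that unfolding closure_Times by force
  moreover have "0 \<in> closure G"
    using assms closure_subset unfolding additive_subgroup_def by blast
  ultimately show ?thesis
    unfolding additive_subgroup_def by blast
qed

lemma additive_subgroup_eq_UNIV_if_ball:
  fixes C :: "'a::real_normed_vector set"
  assumes C: "additive_subgroup C" and "r > 0" and ball: "ball 0 r \<subseteq> C"
  shows "C = UNIV"
proof -
  have "y \<in> C" for y :: 'a
  proof -
    obtain n :: nat where n: "norm y / r < real n"
      using reals_Archimedean2 by blast
    moreover have "norm y / r \<ge> 0"
      using \<open>r > 0\<close> by simp
    ultimately have "real n > 0"
      by linarith
    define v where "v = y /\<^sub>R real n"
    have "norm v < r"
      using n \<open>real n > 0\<close> \<open>r > 0\<close> unfolding v_def by (simp add: field_simps)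
    then have "v \<in> C" using ball by auto
    have "real m *\<^sub>R v \<in> C" for m :: nat
    proof (induction m)
      case 0
      then show ?case using C unfolding additive_subgroup_def by simp
    next
      case (Suc m)
      then show ?case
        using additive_subgroup_add[OF C Suc \<open>v \<in> C\<close>] by (simp add: algebra_simps)
    qed
    moreover have "real n *\<^sub>R v = y"
      using \<open>real n > 0\<close> unfolding v_def by simp
    ultimately show "y \<in> C" by metis
  qed
  then show ?thesis by auto
qed

lemma additive_subgroup_dense_if_interior_closure:
  fixes G :: "'a::real_normed_vector set"
  assumes G: "additive_subgroup G" and "interior (closure G) \<noteq> {}"
  shows "closure G = UNIV"
proof -
  obtain p r where r: "r > 0" "ball p r \<subseteq> closure G"
    using assms(2) by (meson ex_in_conv mem_interior)
  have C: "additive_subgroup (closure G)"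
    using additive_subgroup_closure[OF G] .
  have "ball 0 r \<subseteq> closure G"
  proof
    fix z :: 'a assume "z \<in> ball 0 r"
    then have "z + p \<in> closure G" "p \<in> closure G"
      using r by (auto simp: dist_norm)
    then show "z \<in> closure G"
      using additive_subgroup_diff[OF C] by fastforce
  qed
  then show ?thesis using additive_subgroup_eq_UNIV_if_ball[OF C r(1)] by simp
qed

section \<open>Meager sets and the Baire property\<close>

lemma meagerI:
  fixes F :: "nat \<Rightarrow> 'a::topological_space set"
  assumes "\<And>k. nowhere_dense (F k)" "A \<subseteq> (\<Union>k. F k)"
  shows "meager A"
  unfolding meager_def using assms by blast

lemma meager_empty: "meager {}"
  by (rule meagerI[of "\<lambda>_. {}"]) (auto simp: nowhere_dense_def)

lemma meager_subset:
  assumes "meager B" "A \<subseteq> B"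
  shows "meager A"
  using assms unfolding meager_def by (meson order_trans)

lemma meager_UN:
  fixes A :: "nat \<Rightarrow> 'a::topological_space set"
  assumes "\<And>i. meager (A i)"
  shows "meager (\<Union>i. A i)"
proof -
  obtain F :: "nat \<Rightarrow> nat \<Rightarrow> 'a set"
    where F: "\<And>i k. nowhere_dense (F i k)" "\<And>i. A i \<subseteq> (\<Union>k. F i k)"
    using assms unfolding meager_def by metis
  show ?thesis
  proof (rule meagerI[of "case_prod F \<circ> prod_decode"])
    show "nowhere_dense ((case_prod F \<circ> prod_decode) k)" for k
      using F(1) by (simp add: split_beta)
    show "(\<Union>i. A i) \<subseteq> (\<Union>k. (case_prod F \<circ> prod_decode) k)"
    proof
      fix x assume "x \<in> (\<Union>i. A i)"
      then obtain i k where "x \<in> F i k" using F(2) by blast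
      then have "x \<in> (case_prod F \<circ> prod_decode) (prod_encode (i, k))" by simp
      then show "x \<in> (\<Union>k. (case_prod F \<circ> prod_decode) k)" by blast
    qed
  qed
qed

lemma meager_Un:
  assumes "meager A" "meager B"
  shows "meager (A \<union> B)"
proof -
  have "A \<union> B = (\<Union>i::nat. if i = 0 then A else B)"
    by auto
  moreover have "meager (\<Union>i::nat. if i = 0 then A else B)"
    using assms by (intro meager_UN) simp
  ultimately show ?thesis by simp
qed

lemma meager_translation:
  fixes S :: "'a::real_normed_vector set"
  assumes "meager S"
  shows "meager ((\<lambda>a. a + c) ` S)"
proof -
  have translate: "(\<lambda>a. a + c) ` T = (+) c ` T" for T :: "'a set"
    by (auto simp: add.commute)
  have "nowhere_dense ((\<lambda>a. a + c) ` T)" if "nowhere_dense T" for T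
    using that unfolding nowhere_dense_def translate closure_translation interior_translation
    by simp
  then show ?thesis
    using assms unfolding meager_def by (metis image_UN image_mono)
qed

lemma meager_translation_iff:
  fixes S :: "'a::real_normed_vector set"
  shows "meager ((\<lambda>a. a + c) ` S) \<longleftrightarrow> meager S"
proof
  assume "meager ((\<lambda>a. a + c) ` S)"
  from meager_translation[OF this, of "- c"] show "meager S"
    by (simp add: image_image)
qed (rule meager_translation)

lemma open_not_meager:
  fixes W :: "'a::{real_normed_vector, heine_borel} set"
  assumes "open W" "W \<noteq> {}"
  shows "\<not> meager W"
proof
  assume "meager W"
  then obtain F :: "nat \<Rightarrow> 'a set"
    where F: "\<And>k. nowhere_dense (F k)" "W \<subseteq> (\<Union>k. F k)"
    unfolding meager_def by blast
  define \<G> where "\<G> = range (\<lambda>k. - closure (F k))"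
  have "UNIV \<subseteq> closure (\<Inter>\<G>)"
  proof (rule Baire)
    fix T assume "T \<in> \<G>"
    then obtain k where T: "T = - closure (F k)" unfolding \<G>_def by blast
    have "closure T = UNIV"
      using F(1)[of k] unfolding T closure_complement nowhere_dense_def by simp
    then show "openin (top_of_set UNIV) T \<and> UNIV \<subseteq> closure T"
      unfolding T by auto
  qed (auto simp: \<G>_def)
  then have "W \<inter> \<Inter>\<G> \<noteq> {}"
    using assms open_Int_closure_eq_empty[of W "\<Inter>\<G>"] by auto
  then obtain x k where "x \<in> \<Inter>\<G>" "x \<in> F k" using F(2) by blast
  then show False
    using closure_subset unfolding \<G>_def by blast
qed

lemma additive_subgroup_dense_if_not_meager:
  fixes G :: "'a::real_normed_vector set"
  assumes "additive_subgroup G" "\<not> meager G"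
  shows "closure G = UNIV"
proof (rule additive_subgroup_dense_if_interior_closure[OF assms(1)])
  show "interior (closure G) \<noteq> {}"
    using assms(2) meagerI[of "\<lambda>_. G" G] unfolding nowhere_dense_def by blast
qed

definition baire_property :: "'a::topological_space set \<Rightarrow> bool" where
  "baire_property A \<longleftrightarrow> (\<exists>U. open U \<and> meager ((A - U) \<union> (U - A)))"

lemma nowhere_dense_frontier_open:
  assumes "open U"
  shows "nowhere_dense (closure U - U)"
  unfolding nowhere_dense_def
proof (rule ccontr)
  let ?I = "interior (closure U - U)"
  assume "interior (closure (closure U - U)) \<noteq> {}"
  then have "?I \<inter> closure U \<noteq> {}"
    using assms interior_subset by (fastforce simp: closed_Diff closure_closed)
  then have "?I \<inter> U \<noteq> {}"
    using open_Int_closure_eq_empty[of ?I U] by auto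
  then show False using interior_subset by blast
qed

lemma borel_baire_property:
  fixes A :: "'a::topological_space set"
  assumes "A \<in> sets borel"
  shows "baire_property A"
proof -
  have "A \<in> sigma_sets UNIV {S. open S}" using assms sets_borel by blast
  then show ?thesis
  proof (induction rule: sigma_sets.induct)
    case (Basic a)
    then show ?case unfolding baire_property_def using meager_empty by auto
  next
    case Empty
    show ?case unfolding baire_property_def using meager_empty by auto
  next
    case (Compl a)
    then obtain U where U: "open U" "meager ((a - U) \<union> (U - a))"
      unfolding baire_property_def by blast
    have "meager (closure U - U)"
      using nowhere_dense_frontier_open[OF U(1)] by (intro meagerI[of "\<lambda>_. closure U - U"]) auto
    then have "meager (((a - U) \<union> (U - a)) \<union> (closure U - U))"
      using U(2) meager_Un by blast
    then have "meager (((UNIV - a) - - closure U) \<union> (- closure U - (UNIV - a)))"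
      by (rule meager_subset) (use closure_subset in blast)
    then show ?case unfolding baire_property_def by blast
  next
    case (Union a)
    then obtain U where U: "\<And>i. open (U i)" "\<And>i. meager ((a i - U i) \<union> (U i - a i))"
      unfolding baire_property_def by metis
    then have "meager (\<Union>i. (a i - U i) \<union> (U i - a i))"
      by (intro meager_UN)
    then have "meager (((\<Union>i. a i) - (\<Union>i. U i)) \<union> ((\<Union>i. U i) - (\<Union>i. a i)))"
      by (rule meager_subset) blast
    then show ?case unfolding baire_property_def using U(1) by blast
  qed
qed

lemma borel_not_meager_imp_comeager_in_open:
  fixes B :: "'a::topological_space set"
  assumes "B \<in> sets borel" "\<not> meager B"
  obtains U where "open U" "U \<noteq> {}" "meager (U - B)"
proof -
  obtain U where U: "open U" "meager ((B - U) \<union> (U - B))"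
    using borel_baire_property[OF assms(1)] unfolding baire_property_def by blast
  have "U \<noteq> {}"
    using U(2) assms(2) by auto
  then show ?thesis
    using that U meager_subset by blast
qed

lemma dense_translation_meets_open:
  fixes G U V :: "'a::real_normed_vector set"
  assumes "closure G = UNIV" "open U" "U \<noteq> {}" "V \<noteq> {}"
  obtains g where "g \<in> G" "V \<inter> (\<lambda>a. a + g) ` U \<noteq> {}"
proof -
  obtain u v where "u \<in> U" "v \<in> V" using assms by blast
  then obtain r where r: "r > 0" "ball u r \<subseteq> U"
    using assms(2) open_contains_ball by blast
  obtain g where "g \<in> G" "dist g (v - u) < r"
    using assms(1) r(1) closure_approachable[of "v - u" G] by auto
  then have "v - g \<in> U"
    using r(2) by (auto simp: dist_norm algebra_simps)
  then have "v \<in> V \<inter> (\<lambda>a. a + g) ` U"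
    using \<open>v \<in> V\<close> by (auto intro: rev_image_eqI[of "v - g"])
  then show ?thesis using that \<open>g \<in> G\<close> by blast
qed

lemma borel_invariant_meager_or_comeager:
  fixes B :: "'a::{real_normed_vector, heine_borel} set"
  assumes B: "B \<in> sets borel" and dense: "closure G = UNIV"
    and invariant: "\<And>g y. g \<in> G \<Longrightarrow> y + g \<in> B \<longleftrightarrow> y \<in> B"
  shows "meager B \<or> meager (- B)"
proof (rule ccontr)
  assume "\<not> ?thesis"
  then obtain U V where U: "open U" "U \<noteq> {}" "meager (U - B)"
    and V: "open V" "V \<noteq> {}" "meager (V - - B)"
    using borel_not_meager_imp_comeager_in_open B borel_comp by metis
  obtain g where g: "g \<in> G" "V \<inter> (\<lambda>a. a + g) ` U \<noteq> {}"
    using dense_translation_meets_open[OF dense U(1,2) V(2)] .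
  define W where "W = V \<inter> (\<lambda>a. a + g) ` U"
  have "open ((\<lambda>a. a + g) ` U)"
    using open_translation[OF U(1), of g] by (simp add: add.commute)
  then have "open W"
    using V(1) unfolding W_def by blast
  have "W \<subseteq> (V - - B) \<union> (\<lambda>a. a + g) ` (U - B)"
    using invariant[OF g(1)] unfolding W_def by auto
  moreover have "meager ((V - - B) \<union> (\<lambda>a. a + g) ` (U - B))"
    using meager_Un[OF V(3) meager_translation[OF U(3)]] .
  ultimately have "meager W" by (rule meager_subset[rotated])
  then show False
    using open_not_meager \<open>open W\<close> g(2) unfolding W_def by blast
qed

section \<open>Null sets and Steinhaus' theorem\<close>

lemma null_sets_lebesgue_translation_iff:
  fixes S :: "'a::euclidean_space set"
  shows "(\<lambda>a. a + c) ` S \<in> null_sets lebesgue \<longleftrightarrow> S \<in> null_sets lebesgue"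
proof -
  have "(\<lambda>a. a + c) ` T = (+) c ` T" for T :: "'a set" and c
    by (auto simp: add.commute)
  then have "(\<lambda>a. a + c) ` T \<in> null_sets lebesgue" if "T \<in> null_sets lebesgue" for T :: "'a set" and c
    using negligible_translation[of T c] that by (simp add: negligible_iff_null_sets)
  from this[of "(\<lambda>a. a + c) ` S" "- c"] this[of S c] show ?thesis
    by (auto simp: image_image)
qed

lemma lebesgue_not_null_imp_compact_subset:
  fixes D :: "'a::euclidean_space set"
  assumes "D \<in> sets lebesgue" "D \<notin> null_sets lebesgue"
  obtains T where "compact T" "T \<subseteq> D" "measure lebesgue T > 0"
proof -
  have "(\<Union>n::nat. D \<inter> cball 0 (real n)) = D"
    by (auto simp: real_arch_simple)
  then obtain n :: nat where n: "D \<inter> cball 0 (real n) \<notin> null_sets lebesgue"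
    using assms(2) null_sets_UN[of "\<lambda>n::nat. D \<inter> cball 0 (real n)" lebesgue] by auto
  define D' where "D' = D \<inter> cball 0 (real n)"
  have D': "D' \<in> lmeasurable"
    unfolding D'_def using assms(1) by (intro bounded_set_imp_lmeasurable) auto
  then have "measure lebesgue D' > 0"
    using n unfolding D'_def
    by (metis emeasure_eq_measure2 ennreal_0 measure_nonneg null_setsI fmeasurableD
        order_less_le zero_less_measure_iff)
  then obtain T where T: "closed T" "T \<subseteq> D'" "D' - T \<in> lmeasurable" "emeasure lebesgue (D' - T) < measure lebesgue D'"
    using sets_lebesgue_inner_closed[of D'] D' by (metis fmeasurableD)
  have "compact T"
    using T(1,2) unfolding D'_def by (meson bounded_cball bounded_subset compact_eq_bounded_closed le_infE)
  have "measure lebesgue (D' - T) = measure lebesgue D' - measure lebesgue T"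
    using D' T(2) \<open>compact T\<close> lmeasurable_compact by (intro measurable_measure_Diff) auto
  moreover have "measure lebesgue (D' - T) < measure lebesgue D'"
    using T(3,4) by (simp add: emeasure_eq_measure2 ennreal_less_iff)
  ultimately show ?thesis
    using that \<open>compact T\<close> T(2) unfolding D'_def by auto
qed

lemma compact_differences_contain_ball:
  fixes T :: "'a::euclidean_space set"
  assumes "compact T" "measure lebesgue T > 0"
  obtains \<epsilon> where "\<epsilon> > 0" "ball 0 \<epsilon> \<subseteq> {a - b |a b. a \<in> T \<and> b \<in> T}"
proof -
  have T: "T \<in> lmeasurable" using assms(1) lmeasurable_compact by blast
  obtain U where U: "open U" "T \<subseteq> U" "U - T \<in> lmeasurable"
    "emeasure lebesgue (U - T) < measure lebesgue T"
    using sets_lebesgue_outer_open[of T "measure lebesgue T"] T assms(2) by (metis fmeasurableD)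
  have "U = T \<union> (U - T)" using U(2) by blast
  then have "U \<in> lmeasurable"
    using fmeasurable.Un[OF T U(3)] by simp
  have "measure lebesgue (U - T) = measure lebesgue U - measure lebesgue T"
    using \<open>U \<in> lmeasurable\<close> T U(2) by (intro measurable_measure_Diff) auto
  moreover have "measure lebesgue (U - T) < measure lebesgue T"
    using U(3,4) by (simp add: emeasure_eq_measure2 ennreal_less_iff)
  ultimately have U_small: "measure lebesgue U < 2 * measure lebesgue T" by simp
  obtain \<epsilon> where "\<epsilon> > 0" and \<epsilon>: "(\<Union>x\<in>T. ball x \<epsilon>) \<subseteq> U"
    using compact_subset_open_imp_ball_epsilon_subset[OF assms(1) U(1,2)] by blast
  have "h \<in> {a - b |a b. a \<in> T \<and> b \<in> T}" if "h \<in> ball 0 \<epsilon>" for h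
  proof (rule ccontr)
    assume "h \<notin> {a - b |a b. a \<in> T \<and> b \<in> T}"
    then have disjoint: "T \<inter> (+) h ` T = {}"
      by (fastforce simp: algebra_simps)
    have "(+) h ` T \<subseteq> U"
    proof
      fix z assume "z \<in> (+) h ` T"
      then obtain y where "y \<in> T" "z = h + y" by blast
      then have "z \<in> ball y \<epsilon>" using that by (simp add: dist_norm)
      then show "z \<in> U" using \<epsilon> \<open>y \<in> T\<close> by blast
    qed
    have hT: "(+) h ` T \<in> lmeasurable" using T measurable_translation by blast
    have "2 * measure lebesgue T = measure lebesgue (T \<union> (+) h ` T)"
      using disjoint T hT by (simp add: measure_Un3 fmeasurableD measure_translation)
    also have "\<dots> \<le> measure lebesgue U"
      using \<open>(+) h ` T \<subseteq> U\<close> U(2) \<open>U \<in> lmeasurable\<close> T hT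
      by (intro measure_mono_fmeasurable) (auto simp: fmeasurableD)
    finally show False using U_small by simp
  qed
  then show ?thesis using that \<open>\<epsilon> > 0\<close> by blast
qed

lemma lebesgue_differences_contain_ball:
  fixes D :: "'a::euclidean_space set"
  assumes "D \<in> sets lebesgue" "D \<notin> null_sets lebesgue"
  obtains \<epsilon> where "\<epsilon> > 0" "ball 0 \<epsilon> \<subseteq> {a - b |a b. a \<in> D \<and> b \<in> D}"
proof -
  obtain T where "compact T" "T \<subseteq> D" "measure lebesgue T > 0"
    using lebesgue_not_null_imp_compact_subset[OF assms] .
  obtain \<epsilon> where "\<epsilon> > 0" "ball 0 \<epsilon> \<subseteq> {a - b |a b. a \<in> T \<and> b \<in> T}"
    using compact_differences_contain_ball[OF \<open>compact T\<close> \<open>measure lebesgue T > 0\<close>] .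
  moreover have "{a - b |a b. a \<in> T \<and> b \<in> T} \<subseteq> {a - b |a b. a \<in> D \<and> b \<in> D}"
    using \<open>T \<subseteq> D\<close> by blast
  ultimately have "ball 0 \<epsilon> \<subseteq> {a - b |a b. a \<in> D \<and> b \<in> D}"
    by (meson order_trans)
  with \<open>\<epsilon> > 0\<close> show ?thesis by (rule that)
qed

lemma additive_subgroup_dense_if_not_null:
  fixes G :: "'a::euclidean_space set"
  assumes G: "additive_subgroup G" and "G \<notin> null_sets lebesgue"
  shows "closure G = UNIV"
proof -
  have C: "additive_subgroup (closure G)"
    using additive_subgroup_closure[OF G] .
  have "closure G \<in> sets lebesgue"
    by (simp add: borel_closed sets_completionI_sets)
  moreover have "closure G \<notin> null_sets lebesgue"
    using assms(2) closure_subset null_sets_completion_subset by blast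
  ultimately obtain \<epsilon> where "\<epsilon> > 0" "ball 0 \<epsilon> \<subseteq> {a - b |a b. a \<in> closure G \<and> b \<in> closure G}"
    by (rule lebesgue_differences_contain_ball)
  moreover have "{a - b |a b. a \<in> closure G \<and> b \<in> closure G} \<subseteq> closure G"
    using additive_subgroup_diff[OF C] by blast
  ultimately have "ball 0 \<epsilon> \<subseteq> closure G" by (meson order_trans)
  then show ?thesis
    using additive_subgroup_eq_UNIV_if_ball[OF C \<open>\<epsilon> > 0\<close>] by simp
qed

lemma lborel_exists_translation_Int_not_null:
  fixes A C :: "'a::euclidean_space set"
  assumes A: "A \<in> sets borel" and C: "C \<in> sets borel"
    and "emeasure lborel A \<noteq> 0" "emeasure lborel C \<noteq> 0"
  shows "\<exists>t. emeasure lborel {y \<in> A. y + t \<in> C} \<noteq> 0"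
proof (rule ccontr)
  assume null_slices: "\<nexists>t. emeasure lborel {y \<in> A. y + t \<in> C} \<noteq> 0"
  define S where "S = {p :: 'a \<times> 'a. fst p \<in> A \<and> fst p + snd p \<in> C}"
  have "S = (fst -` A \<inter> space (lborel \<Otimes>\<^sub>M lborel)) \<inter>
      ((\<lambda>p. fst p + snd p) -` C \<inter> space (lborel \<Otimes>\<^sub>M lborel))"
    by (auto simp: S_def space_pair_measure)
  also have "\<dots> \<in> sets (lborel \<Otimes>\<^sub>M lborel)"
    using A C by (intro sets.Int measurable_sets) auto
  finally have S: "S \<in> sets (lborel \<Otimes>\<^sub>M lborel)" .
  have "(\<lambda>x. (x, t)) -` S = {y \<in> A. y + t \<in> C}" for t
    by (auto simp: S_def)
  then have "emeasure (lborel \<Otimes>\<^sub>M lborel) S = 0"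
    using lborel_pair.emeasure_pair_measure_alt2[OF S] null_slices by simp
  moreover have "emeasure lborel (Pair y -` S) = emeasure lborel C * indicator A y" for y
  proof (cases "y \<in> A")
    case True
    have "emeasure (distr lborel borel ((+) y)) C = emeasure lborel C"
      by (simp add: lborel_distr_plus)
    moreover have "Pair y -` S = (+) y -` C"
      using True by (auto simp: S_def)
    ultimately show ?thesis
      using C True by (simp add: emeasure_distr)
  next
    case False
    then have "Pair y -` S = {}" by (auto simp: S_def)
    then show ?thesis using False by simp
  qed
  then have "emeasure (lborel \<Otimes>\<^sub>M lborel) S = emeasure lborel C * emeasure lborel A"
    using A lborel.emeasure_pair_measure_alt[OF S] by (simp add: nn_integral_cmult)
  ultimately show False
    using assms(3,4) by simp
qed

lemma UNIV_not_null_sets_lebesgue: "(UNIV :: 'a::euclidean_space set) \<notin> null_sets lebesgue"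
  using null_sets_completion_iff[of UNIV lborel] by (auto simp: null_sets_def)

lemma borel_invariant_null_or_conull:
  fixes B :: "'a::euclidean_space set"
  assumes B: "B \<in> sets borel" and dense: "closure G = UNIV"
    and invariant: "\<And>g y. g \<in> G \<Longrightarrow> y + g \<in> B \<longleftrightarrow> y \<in> B"
  shows "B \<in> null_sets lebesgue \<or> - B \<in> null_sets lebesgue"
proof (rule ccontr)
  have null_iff: "X \<in> null_sets lebesgue \<longleftrightarrow> emeasure lborel X = 0" if "X \<in> sets borel" for X :: "'a set"
    using that null_sets_completion_iff[of X lborel] by auto
  assume "\<not> ?thesis"
  then obtain t where t: "emeasure lborel {y \<in> B. y + t \<in> - B} \<noteq> 0"
    using lborel_exists_translation_Int_not_null[of B "- B"] B borel_comp null_iff by blast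
  define D where "D = {y \<in> B. y + t \<in> - B}"
  have "D \<in> sets borel"
    unfolding D_def using B by measurable
  then have "D \<in> sets lebesgue" "D \<notin> null_sets lebesgue"
    using t null_iff unfolding D_def by (auto simp: sets_completionI_sets)
  then obtain \<epsilon> where "\<epsilon> > 0" and \<epsilon>: "ball 0 \<epsilon> \<subseteq> {a - b |a b. a \<in> D \<and> b \<in> D}"
    by (rule lebesgue_differences_contain_ball)
  obtain h where "h \<in> G" "dist h (- t) < \<epsilon>"
    using dense \<open>\<epsilon> > 0\<close> closure_approachable[of "- t" G] by auto
  then have "h + t \<in> ball 0 \<epsilon>"
    using norm_minus_cancel[of "h + t"] by (simp add: dist_norm)
  then obtain a b where "a \<in> D" "b \<in> D" "h + t = a - b"
    using \<epsilon> by blast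
  then have "(b + t) + h \<in> B" "b + t \<notin> B"
    unfolding D_def by (auto simp: algebra_simps)
  then show False
    using invariant[OF \<open>h \<in> G\<close>] by blast
qed

section \<open>Translation invariant Borel hulls\<close>

lemma translation_invariant_op_subgroup_hull:
  assumes "translation_invariant_op F psi" "G \<in> F" "additive_subgroup G" "g \<in> G"
  shows "y + g \<in> psi G \<longleftrightarrow> y \<in> psi G"
proof -
  have "psi ((\<lambda>a. a + g) ` G) = (\<lambda>a. a + g) ` psi G"
    using assms(1,2) unfolding translation_invariant_op_def by blast
  then have "(\<lambda>a. a + g) ` psi G = psi G"
    using additive_subgroup_translation_eq[OF assms(3,4)] by simp
  moreover have "y + g \<in> (\<lambda>a. a + g) ` psi G \<longleftrightarrow> y \<in> psi G"
    by auto
  ultimately show ?thesis by simp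
qed

lemma invariant_translation_subset_Compl:
  fixes G :: "'a::ab_semigroup_add set"
  assumes "\<And>g y. g \<in> G \<Longrightarrow> y + g \<in> B \<longleftrightarrow> y \<in> B" "x \<notin> B"
  shows "(\<lambda>a. a + x) ` G \<subseteq> - B"
proof
  fix z assume "z \<in> (\<lambda>a. a + x) ` G"
  then obtain g where "g \<in> G" "z = g + x"
    by blast
  then show "z \<in> - B"
    using assms(1)[of g x] assms(2) by (simp add: add.commute)
qed

lemma no_translation_invariant_null_hull:
  fixes G :: "'a::euclidean_space set" and psi :: "'a set \<Rightarrow> 'a set"
  assumes G: "additive_subgroup G" "G \<in> null_sets lebesgue" "\<not> meager G"
    and hull: "borel_hull_op (null_sets lebesgue) (null_sets lebesgue) psi"
    and invariant: "translation_invariant_op (null_sets lebesgue) psi"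
  shows False
proof -
  have B: "psi G \<in> sets borel" "G \<subseteq> psi G" "psi G - G \<in> null_sets lebesgue"
    using hull G(2) unfolding borel_hull_op_def by auto
  note B_invariant = translation_invariant_op_subgroup_hull[OF invariant G(2,1)]
  have "psi G = G \<union> (psi G - G)"
    using B(2) by blast
  then have "psi G \<in> null_sets lebesgue"
    using null_sets.Un[OF G(2) B(3)] by simp
  then have "psi G \<noteq> UNIV"
    using UNIV_not_null_sets_lebesgue by auto
  then obtain x where "x \<notin> psi G"
    by blast
  have "(\<lambda>a. a + x) ` G \<subseteq> - psi G"
    using invariant_translation_subset_Compl[of G "psi G" x] B_invariant \<open>x \<notin> psi G\<close> by blast
  moreover have "\<not> meager ((\<lambda>a. a + x) ` G)"
    using G(3) meager_translation_iff by blast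
  ultimately have "\<not> meager (- psi G)"
    using meager_subset by blast
  moreover have "\<not> meager (psi G)"
    using B(2) G(3) meager_subset by blast
  moreover have "closure G = UNIV"
    using additive_subgroup_dense_if_not_meager G(1,3) by blast
  ultimately show False
    using borel_invariant_meager_or_comeager[OF B(1) _ B_invariant] by blast
qed

lemma no_translation_invariant_meager_hull:
  fixes G :: "'a::euclidean_space set" and psi :: "'a set \<Rightarrow> 'a set"
  assumes G: "additive_subgroup G" "meager G" "G \<notin> null_sets lebesgue"
    and hull: "borel_hull_op (Collect meager) (Collect meager) psi"
    and invariant: "translation_invariant_op (Collect meager) psi"
  shows False
proof -
  have B: "psi G \<in> sets borel" "G \<subseteq> psi G" "meager (psi G - G)"
    using hull G(2) unfolding borel_hull_op_def by auto
  have "G \<in> Collect meager" using G(2) by simp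
  note B_invariant = translation_invariant_op_subgroup_hull[OF invariant this G(1)]
  have "psi G = G \<union> (psi G - G)"
    using B(2) by blast
  then have "meager (psi G)"
    using meager_Un[OF G(2) B(3)] by simp
  then have "psi G \<noteq> UNIV"
    using open_not_meager[of UNIV] by auto
  then obtain x where "x \<notin> psi G"
    by blast
  have "(\<lambda>a. a + x) ` G \<subseteq> - psi G"
    using invariant_translation_subset_Compl[of G "psi G" x] B_invariant \<open>x \<notin> psi G\<close> by blast
  moreover have "(\<lambda>a. a + x) ` G \<notin> null_sets lebesgue"
    using G(3) null_sets_lebesgue_translation_iff by blast
  ultimately have "- psi G \<notin> null_sets lebesgue"
    using null_sets_completion_subset by blast
  moreover have "psi G \<notin> null_sets lebesgue"
    using B(2) G(3) null_sets_completion_subset by blast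
  moreover have "closure G = UNIV"
    using additive_subgroup_dense_if_not_null G(1,3) by blast
  ultimately show False
    using borel_invariant_null_or_conull[OF B(1) _ B_invariant] by blast
qed

theorem theorem2p2:
  shows "((\<exists>G :: (real ^ 'n) set. additive_subgroup G \<and> G \<in> null_sets lebesgue \<and> \<not> meager G) \<longrightarrow>
           \<not> (\<exists>psi :: (real ^ 'n) set \<Rightarrow> (real ^ 'n) set. borel_hull_op (null_sets lebesgue) (null_sets lebesgue) psi
                   \<and> translation_invariant_op (null_sets lebesgue) psi))
       \<and> ((\<exists>H :: (real ^ 'n) set. additive_subgroup H \<and> meager H \<and> H \<notin> null_sets lebesgue) \<longrightarrow>
           \<not> (\<exists>psi :: (real ^ 'n) set \<Rightarrow> (real ^ 'n) set. borel_hull_op (Collect meager) (Collect meager) psi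
                   \<and> translation_invariant_op (Collect meager) psi))"
  using no_translation_invariant_null_hull no_translation_invariant_meager_hull by blast

end
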